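(* Let $m,n\ge 1$ and let $k>0$ and $l$ be fixed integers. Let $P,Q$ be constant $n\times n$ complex matrices, let $\mathfrak{R}(P)$ be a finite set of distinct invertible constant $n\times n$ matrices $\Lambda$ with $-(\Lambda^{k}+\Lambda^{k-l})=P$, and let $\mathfrak{R}(Q)$ be a finite set of distinct invertible constant $n\times n$ matrices $\tilde\Lambda$ with $-(\tilde\Lambda^{k}+\tilde\Lambda^{k-l})=Q$. For each $\Lambda\in\mathfrak{R}(P)$ let $A_\Lambda$ be a constant $m\times n$ matrix, for each $\tilde\Lambda\in\mathfrak{R}(Q)$ let $B_{\tilde\Lambda}$ be a constant $n\times m$ matrix, and for each pair let $X_{\tilde\Lambda,\Lambda}$ be a constant $n\times n$ matrix satisfying the Stein equation $\tilde\Lambda^{-l}X_{\tilde\Lambda,\Lambda}\Lambda^{l}-X_{\tilde\Lambda,\Lambda}=B_{\tilde\Lambda}A_\Lambda$. Let $\tilde\omega$ be a constant $n\times n$ matrix and set $\gamma_1=\tilde\omega P-Q\tilde\omega$. Define, for $t\in\mathbb{C}$ (or $\mathbb{R}$) and $j\in\mathbb{Z}$, $$\theta=\sum_{\Lambda\in\mathfrak{R}(P)}A_\Lambda e^{\Lambda^l t}\Lambda^j,\qquad \eta=\sum_{\tilde\Lambda\in\mathfrak{R}(Q)}e^{-\tilde\Lambda^l t}\tilde\Lambda^{-j}B_{\tilde\Lambda},$$ $$\tilde\Omega=\sum_{\Lambda\in\mathfrak{R}(P),\,\tilde\Lambda\in\mathfrak{R}(Q)}e^{-\tilde\Lambda^l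 t}\tilde\Lambda^{-j}X_{\tilde\Lambda,\Lambda}e^{\Lambda^l t}\Lambda^j+\tilde\omega,$$ and assume $\tilde\Omega$ is invertible. Let $g_0$ be a constant invertible $m\times m$ matrix. Then $$g=(I-\theta\,\tilde\Omega_{(l)}^{-1}\eta)\,g_0,\qquad \hat q=\theta\,\tilde\Omega_{(l)}^{-1}\gamma_1,\qquad \tilde r=\tilde\Omega^{-1}\eta$$ solve the system $$(g\,g_{(k)}^{-1})_t+(g\,g_{(l)}^{-1})_{(k-l)}-g\,g_{(l)}^{-1}=-(\hat q\,\tilde r_{(k)})_t,\qquad \hat q_t=g\,g_{(l)}^{-1}\hat q_{(l)},\qquad \tilde r_t=-(\tilde r\,g)_{(-l)}\,g^{-1}$$ (wherever the expressions are defined, in particular where $g$ is invertible).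
   Context: All dependent variables are matrix-valued functions of a continuous variable $t$ and a discrete variable $j\in\mathbb{Z}$; subscript $t$ denotes the derivative with respect to $t$, and for an integer $s$, $f_{(s)}(t,j)=f(t,j+s)$ denotes the shifted function. $I$ denotes the identity matrix. The displayed system is a self-consistent source extension of the reduced equation $(g g_{(k)}^{-1})_t=g g_{(l)}^{-1}-(g g_{(l)}^{-1})_{(k-l)}$, which via $V=g\,g_{(1)}^{-1}$ gives the generalized Volterra lattice equations. *)

theory Defs
  imports "HOL-Analysis.Analysis"
begin

definition mpow :: "complex^'n^'n \<Rightarrow> nat \<Rightarrow> complex^'n^'n" where
  "mpow A k = (((**) A) ^^ k) (mat 1)"

definition mpowi :: "complex^'n^'n \<Rightarrow> int \<Rightarrow> complex^'n^'n" where
  "mpowi A j = (if 0 \<le> j then mpow A (nat j) else mpow (matrix_inv A) (nat (- j)))"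

definition mexp :: "complex^'n^'n \<Rightarrow> complex^'n^'n" where
  "mexp A = (\<Sum>k. (1 / fact k) *\<^sub>R mpow A k)"

end

theory Submission
  imports Defs
begin

text \<open>The proof is by dressing. The functions \<open>\<theta>\<close> and \<open>\<eta>\<close> are superpositions of plane waves,
  so \<open>\<theta>_t = \<theta>_(l)\<close> and \<open>\<eta>_t = -\<eta>_(-l)\<close>, and since each \<open>\<Lambda>\<close> is a root of \<open>P\<close>,
  multiplication by \<open>P\<close> (and likewise by \<open>Q\<close>) acts as a combination of shifts. The Stein
  equation makes \<open>\<Omega>\<close> a potential for \<open>\<eta>\<theta>\<close>: \<open>\<Omega>_(l) = \<Omega> + \<eta>\<theta>\<close> and \<open>\<Omega>_t = \<eta>_(-l) \<theta>\<close>.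
  From these relations alone the rest is matrix algebra. The Sherman--Morrison--Woodbury
  identity gives \<open>g\<^sup>-\<^sup>1 = g\<^sub>0\<^sup>-\<^sup>1 (I + \<theta> \<Omega>\<^sup>-\<^sup>1 \<eta>)\<close>, so \<open>g\<close> is always invertible. With
  \<open>F = \<theta> \<Omega>_(l)\<^sup>-\<^sup>1 \<eta>_(l)\<close> one finds \<open>g g_(k)\<^sup>-\<^sup>1 = I + F - F_(k-l) - q r_(k)\<close> and
  \<open>F_t = g g_(l)\<^sup>-\<^sup>1 - I\<close>, which is the first equation.\<close>

lemma matrix_add_rdistrib: "(A + B) ** C = A ** C + B ** (C::'a::semiring_1^_^_)"
  by (vector matrix_matrix_mult_def sum.distrib[symmetric] field_simps)

lemma matrix_diff_ldistrib: "(A::'a::ring_1^_^_) ** (B - C) = A ** B - A ** C"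
  by (vector matrix_matrix_mult_def sum_subtractf[symmetric] field_simps)

lemma matrix_diff_rdistrib: "((A::'a::ring_1^_^_) - B) ** C = A ** C - B ** C"
  by (vector matrix_matrix_mult_def sum_subtractf[symmetric] field_simps)

lemma matrix_minus_left: "(- (A::'a::ring_1^_^_)) ** B = - (A ** B)"
  by (vector matrix_matrix_mult_def sum_negf[symmetric])

lemma matrix_minus_right: "(A::'a::ring_1^_^_) ** (- B) = - (A ** B)"
  by (vector matrix_matrix_mult_def sum_negf[symmetric])

lemma sum_matrix_mul: "sum f I ** (B::'a::semiring_1^_^_) = (\<Sum>i\<in>I. f i ** B)"
  by (induct I rule: infinite_finite_induct) (auto simp: matrix_add_rdistrib)

lemma matrix_mul_sum: "(B::'a::semiring_1^_^_) ** sum f I = (\<Sum>i\<in>I. B ** f i)"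
  by (induct I rule: infinite_finite_induct) (auto simp: matrix_add_ldistrib)

lemmas matrix_distribs = matrix_add_ldistrib matrix_add_rdistrib matrix_diff_ldistrib
  matrix_diff_rdistrib matrix_minus_left matrix_minus_right

lemma matrix_inv_right: "invertible (A::'a::semiring_1^'n^'n) \<Longrightarrow> A ** matrix_inv A = mat 1"
  and matrix_inv_left: "invertible (A::'a::semiring_1^'n^'n) \<Longrightarrow> matrix_inv A ** A = mat 1"
  using someI_ex[of "\<lambda>A'. A ** A' = mat 1 \<and> A' ** A = mat 1"]
  unfolding invertible_def matrix_inv_def by auto

lemma matrix_mul_inv_cancel:
  fixes A :: "'a::semiring_1^'n^'n"
  assumes "invertible A"
  shows "X ** A ** matrix_inv A = X" and "X ** matrix_inv A ** A = X"
  by (simp_all add: matrix_mul_assoc[symmetric] matrix_inv_left[OF assms] matrix_inv_right[OF assms])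

lemma matrix_inv_unique:
  fixes A B :: "'a::semiring_1^'n^'n"
  assumes AB: "A ** B = mat 1" and BA: "B ** A = mat 1"
  shows "matrix_inv A = B"
proof -
  have A: "invertible A" using AB BA unfolding invertible_def by blast
  have "matrix_inv A = (B ** A) ** matrix_inv A" using BA by simp
  also have "\<dots> = B" by (simp add: matrix_mul_assoc[symmetric] matrix_inv_right[OF A])
  finally show ?thesis .
qed

lemma matrix_inv_diff:
  fixes S T :: "'a::ring_1^'n^'n"
  assumes S: "invertible S" and T: "invertible T"
  shows "matrix_inv S - matrix_inv T = matrix_inv S ** (T - S) ** matrix_inv T"
    and "matrix_inv S - matrix_inv T = matrix_inv T ** (T - S) ** matrix_inv S"
  by (simp_all add: matrix_distribs matrix_mul_inv_cancel(1) S T matrix_inv_left)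

lemma matrix_inv_perturb:
  fixes S S' :: "'a::ring_1^'n^'n"
  assumes S: "invertible S" and S': "invertible S'" and "S' = S + E ** T"
  shows "Y ** matrix_inv S' ** E ** T ** matrix_inv S ** Z = Y ** matrix_inv S ** Z - Y ** matrix_inv S' ** Z"
    and "Y ** matrix_inv S ** E ** T ** matrix_inv S' ** Z = Y ** matrix_inv S ** Z - Y ** matrix_inv S' ** Z"
proof -
  have ET: "E ** T = S' - S" using \<open>S' = S + E ** T\<close> by simp
  have "Y ** matrix_inv S' ** E ** T ** matrix_inv S ** Z = Y ** (matrix_inv S' ** (E ** T) ** matrix_inv S) ** Z"
    and "Y ** matrix_inv S ** E ** T ** matrix_inv S' ** Z = Y ** (matrix_inv S ** (E ** T) ** matrix_inv S') ** Z"
    by (simp_all only: matrix_mul_assoc)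
  then show "Y ** matrix_inv S' ** E ** T ** matrix_inv S ** Z = Y ** matrix_inv S ** Z - Y ** matrix_inv S' ** Z"
    and "Y ** matrix_inv S ** E ** T ** matrix_inv S' ** Z = Y ** matrix_inv S ** Z - Y ** matrix_inv S' ** Z"
    unfolding ET matrix_inv_diff[OF S S', symmetric] by (simp_all add: matrix_distribs)
qed

lemma push_through_inverse:
  fixes S S' :: "'a::ring_1^'n^'n"
  assumes "invertible S" and "invertible S'" and "S' = S + E ** T"
  shows "(mat 1 - T ** matrix_inv S' ** E) ** (mat 1 + T ** matrix_inv S ** E) = mat 1"
    and "(mat 1 + T ** matrix_inv S ** E) ** (mat 1 - T ** matrix_inv S' ** E) = mat 1"
  using matrix_inv_perturb[OF assms, of T E]
  by (simp_all add: matrix_distribs matrix_mul_assoc)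

section \<open>Matrix products as bounded bilinear maps\<close>

lemma bounded_bilinear_matrix_mul:
  "bounded_bilinear (\<lambda>(A::complex^'n^'m) (B::complex^'p^'n). A ** B)"
proof -
  have "bilinear (\<lambda>(A::complex^'n^'m) (B::complex^'p^'n). A ** B)"
    unfolding bilinear_def
    by (auto intro!: linearI simp: matrix_distribs matrix_scalar_ac scalar_matrix_assoc)
  then show ?thesis by (simp add: bilinear_conv_bounded_bilinear)
qed

lemma bounded_linear_matrix_mul_left: "bounded_linear (\<lambda>(A::complex^'n^'m). A ** (B::complex^'p^'n))"
  using bounded_bilinear.bounded_linear_left[OF bounded_bilinear_matrix_mul] .

lemma bounded_linear_matrix_mul_right: "bounded_linear (\<lambda>(B::complex^'p^'n). (A::complex^'n^'m) ** B)"
  using bounded_bilinear.bounded_linear_right[OF bounded_bilinear_matrix_mul] .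

lemma matrix_mul3_norm_bound:
  obtains K where "K > 0" and "\<And>(A::complex^'n^'m) (B::complex^'p^'n) (C::complex^'q^'p).
    norm (A ** B ** C) \<le> norm A * norm B * norm C * K"
proof -
  obtain K1 where K1: "K1 > 0"
    "\<And>(x::complex^'n^'m) (y::complex^'p^'n). norm (x ** y) \<le> norm x * norm y * K1"
    using bounded_bilinear.pos_bounded[OF bounded_bilinear_matrix_mul] by auto
  obtain K2 where K2: "K2 > 0"
    "\<And>(x::complex^'p^'m) (y::complex^'q^'p). norm (x ** y) \<le> norm x * norm y * K2"
    using bounded_bilinear.pos_bounded[OF bounded_bilinear_matrix_mul] by auto
  have "norm (A ** B ** C) \<le> norm A * norm B * norm C * (K1 * K2)"
    for A :: "complex^'n^'m" and B :: "complex^'p^'n" and C :: "complex^'q^'p"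
  proof -
    have "norm (A ** B ** C) \<le> norm (A ** B) * norm C * K2" by (rule K2(2))
    also have "\<dots> \<le> (norm A * norm B * K1) * norm C * K2"
      using K1(2)[of A B] K2(1) by (intro mult_right_mono) auto
    finally show ?thesis by (simp add: mult_ac)
  qed
  then show ?thesis using that[of "K1 * K2"] K1 K2 by auto
qed

lemma has_vector_derivative_matrix_mul:
  fixes f :: "real \<Rightarrow> complex^'n^'m" and g :: "real \<Rightarrow> complex^'p^'n"
  shows "(f has_vector_derivative f') (at x within s) \<Longrightarrow> (g has_vector_derivative g') (at x within s) \<Longrightarrow>
    ((\<lambda>x. f x ** g x) has_vector_derivative (f x ** g' + f' ** g x)) (at x within s)"
  by (rule bounded_bilinear.has_vector_derivative[OF bounded_bilinear_matrix_mul])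

lemma has_vector_derivative_matrix_mul_left:
  fixes f :: "real \<Rightarrow> complex^'n^'m" and B :: "complex^'p^'n"
  shows "(f has_vector_derivative f') F \<Longrightarrow> ((\<lambda>x. f x ** B) has_vector_derivative f' ** B) F"
  by (rule bounded_linear.has_vector_derivative[OF bounded_linear_matrix_mul_left])

lemma has_vector_derivative_matrix_mul_right:
  fixes A :: "complex^'n^'m" and f :: "real \<Rightarrow> complex^'p^'n"
  shows "(f has_vector_derivative f') F \<Longrightarrow> ((\<lambda>x. A ** f x) has_vector_derivative A ** f') F"
  by (rule bounded_linear.has_vector_derivative[OF bounded_linear_matrix_mul_right])

section \<open>Integer powers and the exponential of a matrix\<close>

lemma mpow_0 [simp]: "mpow M 0 = mat 1"
  by (simp add: mpow_def)

lemma mpow_Suc: "mpow M (Suc n) = M ** mpow M n"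
  by (simp add: mpow_def)

lemma mpow_commute: "A ** M = M ** A \<Longrightarrow> A ** mpow M n = mpow M n ** A"
  by (induct n) (simp_all add: mpow_Suc, metis matrix_mul_assoc)

lemma mpow_Suc_right: "mpow M (Suc n) = mpow M n ** M"
  by (simp add: mpow_Suc mpow_commute)

lemma mpow_scaleR: "mpow (c *\<^sub>R M) n = c ^ n *\<^sub>R mpow M n"
  by (induct n) (simp_all add: mpow_Suc scalar_matrix_assoc[symmetric] matrix_scalar_ac)

lemma mpowi_0 [simp]: "mpowi L 0 = mat 1"
  by (simp add: mpowi_def)

lemma mpowi_succ:
  assumes "invertible L"
  shows "mpowi L (a + 1) = mpowi L a ** L"
proof (cases "0 \<le> a")
  case True
  then have "nat (a + 1) = Suc (nat a)" by simp
  then show ?thesis using True by (simp add: mpowi_def mpow_Suc_right)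
next
  case False
  then have "nat (- a) = Suc (nat (- (a + 1)))" by simp
  then have "mpowi L a ** L = mpow (matrix_inv L) (nat (- (a + 1)))"
    using False by (simp add: mpowi_def mpow_Suc_right matrix_mul_inv_cancel[OF assms])
  then show ?thesis using False by (cases "a = - 1") (auto simp: mpowi_def)
qed

lemma mpowi_pred:
  assumes "invertible L"
  shows "mpowi L (a - 1) = mpowi L a ** matrix_inv L"
  using mpowi_succ[OF assms, of "a - 1"] by (simp add: matrix_mul_inv_cancel[OF assms])

lemma mpowi_add:
  assumes "invertible L"
  shows "mpowi L (a + b) = mpowi L a ** mpowi L b"
proof (induct b rule: int_induct[where k = 0])
  case base
  then show ?case by simp
next
  case (step1 i)
  then show ?case
    using mpowi_succ[OF assms, of "a + i"] mpowi_succ[OF assms, of i]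
    by (simp add: add.assoc[symmetric] matrix_mul_assoc)
next
  case (step2 i)
  then show ?case
    using mpowi_pred[OF assms, of "a + i"] mpowi_pred[OF assms, of i]
    by (simp add: diff_add_eq[symmetric] add_diff_eq matrix_mul_assoc)
qed

lemma mpowi_commute:
  assumes "invertible L"
  shows "mpowi L a ** mpowi L b = mpowi L b ** mpowi L a"
  by (metis mpowi_add[OF assms] add.commute)

lemma mpow_norm_bound:
  fixes M :: "complex^'n^'n"
  obtains a b where "a \<ge> 0" "b \<ge> 0" "\<And>n. norm (mpow M n) \<le> a * b ^ n"
proof -
  obtain K where K: "K > 0" "\<And>x y. norm ((x::complex^'n^'n) ** (y::complex^'n^'n)) \<le> norm x * norm y * K"
    using bounded_bilinear.pos_bounded[OF bounded_bilinear_matrix_mul] by auto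
  define c where "c = norm (mat 1 :: complex^'n^'n)"
  have "norm (mpow M n) \<le> c * (K * norm M) ^ n" for n
  proof (induct n)
    case 0
    then show ?case by (simp add: c_def)
  next
    case (Suc n)
    have "norm (mpow M (Suc n)) \<le> norm M * norm (mpow M n) * K"
      unfolding mpow_Suc by (rule K(2))
    also have "\<dots> \<le> norm M * (c * (K * norm M) ^ n) * K"
      by (rule mult_right_mono[OF mult_left_mono[OF Suc]]) (use K(1) in auto)
    also have "\<dots> = c * (K * norm M) ^ Suc n" by (simp add: mult_ac)
    finally show ?case .
  qed
  then show ?thesis
    using that[of c "K * norm M"] K(1) unfolding c_def by (meson mult_nonneg_nonneg norm_ge_zero less_imp_le)
qed

lemma summable_exp_series_bounded:
  fixes D :: "nat \<Rightarrow> 'a::banach"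
  assumes bound: "\<And>n. norm (D n) \<le> a * b ^ n" and "b \<ge> 0"
  shows "summable (\<lambda>n. (x ^ n / fact n) *\<^sub>R D n)"
proof (rule summable_comparison_test)
  show "summable (\<lambda>n. a * (inverse (fact n) * (\<bar>x\<bar> * b) ^ n))"
    by (intro summable_mult summable_exp)
  have "norm ((x ^ n / fact n) *\<^sub>R D n) \<le> a * (inverse (fact n) * (\<bar>x\<bar> * b) ^ n)" for n
  proof -
    have "norm ((x ^ n / fact n) *\<^sub>R D n) = (\<bar>x\<bar> ^ n / fact n) * norm (D n)"
      by (simp add: power_abs)
    also have "\<dots> \<le> (\<bar>x\<bar> ^ n / fact n) * (a * b ^ n)"
      by (rule mult_left_mono[OF bound]) simp
    also have "\<dots> = a * (inverse (fact n) * (\<bar>x\<bar> * b) ^ n)"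
      by (simp add: power_mult_distrib divide_inverse mult_ac)
    finally show ?thesis .
  qed
  then show "\<exists>N. \<forall>n\<ge>N. norm ((x ^ n / fact n) *\<^sub>R D n) \<le> a * (inverse (fact n) * (\<bar>x\<bar> * b) ^ n)"
    by blast
qed

lemma uniform_limit_exp_series_bounded:
  fixes D :: "nat \<Rightarrow> 'a::banach"
  assumes bound: "\<And>n. norm (D n) \<le> a * b ^ n" and "b \<ge> 0"
  shows "uniform_limit (ball t 1) (\<lambda>n x. \<Sum>i<n. (x ^ i / fact i) *\<^sub>R D i)
           (\<lambda>x. \<Sum>n. (x ^ n / fact n) *\<^sub>R D n) sequentially"
proof (rule Weierstrass_m_test)
  fix n x assume "x \<in> ball t 1"
  then have x: "\<bar>x\<bar> \<le> \<bar>t\<bar> + 1" by (auto simp: dist_real_def)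
  have "norm ((x ^ n / fact n) *\<^sub>R D n) = (\<bar>x\<bar> ^ n / fact n) * norm (D n)"
    by (simp add: power_abs)
  also have "\<dots> \<le> ((\<bar>t\<bar> + 1) ^ n / fact n) * (a * b ^ n)"
    using bound[of n] x assms(2)
    by (intro mult_mono divide_right_mono power_mono) (auto intro: order_trans[OF norm_ge_zero])
  finally show "norm ((x ^ n / fact n) *\<^sub>R D n) \<le> a * (inverse (fact n) * ((\<bar>t\<bar> + 1) * b) ^ n)"
    by (simp add: power_mult_distrib divide_inverse mult_ac)
next
  show "summable (\<lambda>n. a * (inverse (fact n) * ((\<bar>t\<bar> + 1) * b) ^ n))"
    by (intro summable_mult summable_exp)
qed

lemma has_vector_derivative_series:
  fixes f :: "nat \<Rightarrow> real \<Rightarrow> 'a::banach"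
  assumes "convex S"
    and "\<And>n x. x \<in> S \<Longrightarrow> (f n has_vector_derivative f' n x) (at x within S)"
    and "uniform_limit S (\<lambda>n x. \<Sum>i<n. f' i x) g' sequentially"
    and "y \<in> S" and "summable (\<lambda>n. f n y)"
  shows "\<exists>g. \<forall>x\<in>S. (\<lambda>n. f n x) sums g x \<and> (g has_vector_derivative g' x) (at x within S)"
  unfolding has_vector_derivative_def
proof (rule has_derivative_series)
  fix e :: real assume "e > 0"
  then obtain N where N: "\<And>n x. n \<ge> N \<Longrightarrow> x \<in> S \<Longrightarrow> norm ((\<Sum>i<n. f' i x) - g' x) < e"
    using assms(3) unfolding uniform_limit_iff eventually_sequentially dist_norm by blast
  have "norm ((\<Sum>i<n. h *\<^sub>R f' i x) - h *\<^sub>R g' x) \<le> e * norm h" if "n \<ge> N" "x \<in> S" for n x h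
  proof -
    have "norm ((\<Sum>i<n. h *\<^sub>R f' i x) - h *\<^sub>R g' x) = \<bar>h\<bar> * norm ((\<Sum>i<n. f' i x) - g' x)"
      by (simp add: scaleR_sum_right[symmetric] scaleR_diff_right[symmetric])
    also have "\<dots> \<le> \<bar>h\<bar> * e" using N[OF that] by (intro mult_left_mono) auto
    finally show ?thesis by (simp add: mult.commute)
  qed
  then show "\<forall>\<^sub>F n in sequentially. \<forall>x\<in>S. \<forall>h. norm ((\<Sum>i<n. h *\<^sub>R f' i x) - h *\<^sub>R g' x) \<le> e * norm h"
    unfolding eventually_sequentially by blast
qed (use assms in \<open>auto simp: has_vector_derivative_def summable_sums\<close>)

lemma has_vector_derivative_exp_series:
  fixes C :: "nat \<Rightarrow> 'a::banach"
  assumes bound: "\<And>n. norm (C n) \<le> a * b ^ n" and b: "b \<ge> 0"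
  shows "((\<lambda>s. \<Sum>n. (s ^ n / fact n) *\<^sub>R C n) has_vector_derivative
          (\<Sum>n. (t ^ n / fact n) *\<^sub>R C (Suc n))) (at t)"
proof -
  define d where "d n x = (real n * x ^ (n - 1) / fact n) *\<^sub>R C n" for n x
  define G where "G x = (\<Sum>n. (x ^ n / fact n) *\<^sub>R C (Suc n))" for x
  have "((\<lambda>x. (x ^ n / fact n) *\<^sub>R C n) has_vector_derivative d n x) (at x within ball t 1)" for n x
    unfolding d_def by (auto intro!: derivative_eq_intros)
  moreover have "uniform_limit (ball t 1) (\<lambda>n x. \<Sum>i<n. d i x) G sequentially"
  proof -
    have "norm (C (Suc n)) \<le> (a * b) * b ^ n" for n
      using bound[of "Suc n"] by (simp add: mult.assoc)
    then have "uniform_limit (ball t 1) (\<lambda>n x. \<Sum>i<n. (x ^ i / fact i) *\<^sub>R C (Suc i)) G sequentially"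
      unfolding G_def using b by (rule uniform_limit_exp_series_bounded)
    moreover have "(\<Sum>i<Suc n. d i x) = (\<Sum>i<n. (x ^ i / fact i) *\<^sub>R C (Suc i))" for n x
      unfolding sum.lessThan_Suc_shift by (simp add: d_def divide_simps)
    ultimately show ?thesis
      by (subst filterlim_sequentially_Suc[symmetric]) simp
  qed
  moreover have "summable (\<lambda>n. (t ^ n / fact n) *\<^sub>R C n)"
    by (rule summable_exp_series_bounded[OF bound b])
  ultimately have "\<exists>g. \<forall>x\<in>ball t 1.
      (\<lambda>n. (x ^ n / fact n) *\<^sub>R C n) sums g x \<and> (g has_vector_derivative G x) (at x within ball t 1)"
    by (intro has_vector_derivative_series[where y = t]) auto
  then obtain g where g: "\<And>x. x \<in> ball t 1 \<Longrightarrow>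
      (\<lambda>n. (x ^ n / fact n) *\<^sub>R C n) sums g x \<and> (g has_vector_derivative G x) (at x within ball t 1)"
    by blast
  have "(g has_vector_derivative G t) (at t)"
    using g[of t] at_within_open[of t "ball t 1"] by simp
  then show ?thesis
    unfolding G_def
    by (rule has_vector_derivative_transform_within_open[where S = "ball t 1"])
       (use g sums_unique in auto)
qed

lemma mexp_series: "mexp (t *\<^sub>R M) = (\<Sum>n. (t ^ n / fact n) *\<^sub>R mpow M n)"
  unfolding mexp_def mpow_scaleR by simp

lemma summable_mexp_series: "summable (\<lambda>n. (t ^ n / fact n) *\<^sub>R mpow (M::complex^'n^'n) n)"
  by (rule mpow_norm_bound[of M]) (rule summable_exp_series_bounded)

lemma has_vector_derivative_mexp:
  "((\<lambda>s. mexp (s *\<^sub>R (M::complex^'n^'n))) has_vector_derivative mexp (t *\<^sub>R M) ** M) (at t)"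
proof -
  obtain a b where "a \<ge> 0" and b: "b \<ge> 0" and bound: "\<And>n. norm (mpow M n) \<le> a * b ^ n"
    by (rule mpow_norm_bound[of M]) blast
  have "((\<lambda>s. mexp (s *\<^sub>R M)) has_vector_derivative
      (\<Sum>n. (t ^ n / fact n) *\<^sub>R mpow M (Suc n))) (at t)"
    unfolding mexp_series by (rule has_vector_derivative_exp_series[OF bound b])
  then show ?thesis
  proof (rule has_vector_derivative_eq_rhs)
    have "(\<Sum>n. (t ^ n / fact n) *\<^sub>R mpow M (Suc n)) = (\<Sum>n. ((t ^ n / fact n) *\<^sub>R mpow M n) ** M)"
      by (simp only: mpow_Suc_right scalar_matrix_assoc)
    also have "\<dots> = mexp (t *\<^sub>R M) ** M"
      unfolding mexp_series
      by (rule bounded_linear.suminf[OF bounded_linear_matrix_mul_left summable_mexp_series, symmetric])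
    finally show "(\<Sum>n. (t ^ n / fact n) *\<^sub>R mpow M (Suc n)) = mexp (t *\<^sub>R M) ** M" .
  qed
qed

lemma has_vector_derivative_mexp_neg:
  "((\<lambda>s. mexp ((- s) *\<^sub>R (M::complex^'n^'n))) has_vector_derivative - (mexp ((- t) *\<^sub>R M) ** M)) (at t)"
  using has_vector_derivative_mexp[of "- M" t] by (simp add: matrix_minus_right)

lemma mexp_commute:
  assumes "A ** M = M ** (A::complex^'n^'n)"
  shows "A ** mexp (t *\<^sub>R M) = mexp (t *\<^sub>R M) ** A"
proof -
  have "A ** mexp (t *\<^sub>R M) = (\<Sum>n. A ** ((t ^ n / fact n) *\<^sub>R mpow M n))"
    unfolding mexp_series
    by (rule bounded_linear.suminf[OF bounded_linear_matrix_mul_right summable_mexp_series])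
  also have "\<dots> = (\<Sum>n. ((t ^ n / fact n) *\<^sub>R mpow M n) ** A)"
    by (simp add: matrix_scalar_ac scalar_matrix_assoc[symmetric] mpow_commute[OF assms])
  also have "\<dots> = mexp (t *\<^sub>R M) ** A"
    unfolding mexp_series
    by (rule bounded_linear.suminf[OF bounded_linear_matrix_mul_left summable_mexp_series, symmetric])
  finally show ?thesis .
qed

section \<open>Derivative of the matrix inverse\<close>

lemma has_vector_derivative_iff_difference_quotient:
  fixes f :: "real \<Rightarrow> 'a::real_normed_vector"
  shows "(f has_vector_derivative D) (at x) \<longleftrightarrow> ((\<lambda>y. (f y - f x) /\<^sub>R (y - x)) \<longlongrightarrow> D) (at x)"
proof -
  have eq: "\<forall>\<^sub>F y in at x. norm (((f y - f x) - (y - x) *\<^sub>R D) /\<^sub>R norm (y - x))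
      = norm ((f y - f x) /\<^sub>R (y - x) - D)"
    unfolding eventually_at_filter
  proof (intro always_eventually allI impI)
    fix y assume "y \<noteq> x"
    then have "(f y - f x) /\<^sub>R (y - x) - D = ((f y - f x) - (y - x) *\<^sub>R D) /\<^sub>R (y - x)"
      by (simp add: scaleR_diff_right)
    then show "norm (((f y - f x) - (y - x) *\<^sub>R D) /\<^sub>R norm (y - x)) = norm ((f y - f x) /\<^sub>R (y - x) - D)"
      by simp
  qed
  have "(f has_vector_derivative D) (at x) \<longleftrightarrow>
      ((\<lambda>y. ((f y - f x) - (y - x) *\<^sub>R D) /\<^sub>R norm (y - x)) \<longlongrightarrow> 0) (at x)"
    unfolding has_vector_derivative_def using has_derivative_at_within[of f "\<lambda>h. h *\<^sub>R D" x UNIV]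
    by (simp add: bounded_linear_scaleR_left)
  also have "\<dots> \<longleftrightarrow> ((\<lambda>y. norm (((f y - f x) - (y - x) *\<^sub>R D) /\<^sub>R norm (y - x))) \<longlongrightarrow> 0) (at x)"
    by (rule tendsto_norm_zero_iff[symmetric])
  also have "\<dots> \<longleftrightarrow> ((\<lambda>y. norm ((f y - f x) /\<^sub>R (y - x) - D)) \<longlongrightarrow> 0) (at x)"
    by (rule tendsto_cong[OF eq])
  also have "\<dots> \<longleftrightarrow> ((\<lambda>y. (f y - f x) /\<^sub>R (y - x)) \<longlongrightarrow> D) (at x)"
    by (simp add: tendsto_norm_zero_iff LIM_zero_iff)
  finally show ?thesis .
qed

text \<open>By \<open>matrix_inv_diff\<close>, once \<open>S s\<close> is close to \<open>S t\<close> the norm of \<open>matrix_inv (S s)\<close> is at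
  most twice that of \<open>matrix_inv (S t)\<close>, and then the two inverses differ by
  \<open>O(norm (S s - S t))\<close>.\<close>
lemma tendsto_matrix_inv:
  fixes S :: "real \<Rightarrow> complex^'n^'n"
  assumes inv: "\<And>s. invertible (S s)" and lim: "(S \<longlongrightarrow> S t) (at t)"
  shows "((\<lambda>s. matrix_inv (S s)) \<longlongrightarrow> matrix_inv (S t)) (at t)"
proof -
  define R where "R s = matrix_inv (S s)" for s
  define r where "r = norm (R t)"
  define \<delta> where "\<delta> s = norm (S s - S t)" for s
  obtain K where K: "K > 0"
    "\<And>(A::complex^'n^'n) (B::complex^'n^'n) (C::complex^'n^'n). norm (A ** B ** C) \<le> norm A * norm B * norm C * K"
    by (rule matrix_mul3_norm_bound) blast
  have \<delta>: "(\<delta> \<longlongrightarrow> 0) (at t)"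
    unfolding \<delta>_def using lim by (simp add: LIM_zero tendsto_norm_zero)
  have bound: "norm (R s - R t) \<le> norm (R s) * \<delta> s * r * K" for s
    using K(2)[of "R s" "S t - S s" "R t"] matrix_inv_diff(1)[OF inv inv, of s t]
    unfolding \<delta>_def r_def R_def by (simp add: norm_minus_commute)
  have "((\<lambda>s. \<delta> s * (r * K)) \<longlongrightarrow> 0 * (r * K)) (at t)" by (intro tendsto_mult \<delta> tendsto_const)
  then have "\<forall>\<^sub>F s in at t. \<delta> s * (r * K) < 1/2" by (rule order_tendstoD) simp
  then have ev: "\<forall>\<^sub>F s in at t. norm (R s - R t) \<le> 2 * r * r * K * \<delta> s"
  proof eventually_elim
    case (elim s)
    have "norm (R s) \<le> norm (R s - R t) + r" unfolding r_def by (metis norm_triangle_sub add.commute)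
    also have "\<dots> \<le> norm (R s) * (\<delta> s * (r * K)) + r" using bound[of s] by (simp add: mult_ac)
    also have "\<dots> \<le> norm (R s) * (1/2) + r" using elim by (intro add_right_mono mult_left_mono) auto
    finally have "norm (R s) \<le> 2 * r" by simp
    then have "norm (R s) * \<delta> s * r * K \<le> (2 * r) * \<delta> s * r * K"
      using K(1) by (intro mult_right_mono) (auto simp: \<delta>_def r_def)
    then show ?case using bound[of s] by (simp add: mult_ac)
  qed
  have "((\<lambda>s. 2 * r * r * K * \<delta> s) \<longlongrightarrow> 2 * r * r * K * 0) (at t)"
    by (intro tendsto_mult \<delta> tendsto_const)
  then have "((\<lambda>s. R s - R t) \<longlongrightarrow> 0) (at t)"
    by (intro Lim_null_comparison[OF ev]) simp
  then show ?thesis unfolding R_def by (simp add: LIM_zero_iff)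
qed

lemma has_vector_derivative_matrix_inv:
  fixes S :: "real \<Rightarrow> complex^'n^'n"
  assumes inv: "\<And>s. invertible (S s)" and S': "(S has_vector_derivative S') (at t)"
  shows "((\<lambda>s. matrix_inv (S s)) has_vector_derivative
           - (matrix_inv (S t) ** S' ** matrix_inv (S t))) (at t)"
proof -
  define R where "R s = matrix_inv (S s)" for s
  have "(R \<longlongrightarrow> R t) (at t)"
    unfolding R_def using has_vector_derivative_continuous[OF S'] inv
    by (intro tendsto_matrix_inv) (simp_all add: continuous_at)
  moreover have "((\<lambda>y. (S y - S t) /\<^sub>R (y - t)) \<longlongrightarrow> S') (at t)"
    using S' by (simp add: has_vector_derivative_iff_difference_quotient)
  ultimately have "((\<lambda>y. - (R y ** ((S y - S t) /\<^sub>R (y - t)) ** R t)) \<longlongrightarrow> - (R t ** S' ** R t)) (at t)"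
    by (intro tendsto_minus bounded_bilinear.tendsto[OF bounded_bilinear_matrix_mul] tendsto_const)
  moreover have "(R y - R t) /\<^sub>R (y - t) = - (R y ** ((S y - S t) /\<^sub>R (y - t)) ** R t)" for y
  proof -
    have "(R y - R t) /\<^sub>R (y - t) = R y ** (- (S y - S t) /\<^sub>R (y - t)) ** R t"
      unfolding R_def matrix_inv_diff(1)[OF inv inv] by (simp add: matrix_scalar_ac scalar_matrix_assoc)
    then show ?thesis by (simp only: scaleR_minus_right matrix_minus_left matrix_minus_right)
  qed
  ultimately show ?thesis
    unfolding has_vector_derivative_iff_difference_quotient R_def by simp
qed

section \<open>Dressing\<close>

text \<open>In \<open>\<gamma>_eq\<close> the constant \<open>\<omega>\<close> of \<open>\<gamma> = \<omega> P - Q \<omega>\<close> has been eliminated using \<open>\<Omega>\<close>.\<close>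
locale volterra_dressing =
  fixes l k :: int and P Q \<gamma> :: "complex^'n^'n" and g0 :: "complex^'m^'m"
    and \<theta> :: "real \<Rightarrow> int \<Rightarrow> complex^'n^'m"
    and \<eta> :: "real \<Rightarrow> int \<Rightarrow> complex^'m^'n"
    and \<Omega> :: "real \<Rightarrow> int \<Rightarrow> complex^'n^'n"
  assumes \<Omega>_invertible: "\<And>t a. invertible (\<Omega> t a)"
    and g0_invertible: "invertible g0"
    and \<Omega>_shift: "\<And>t a. \<Omega> t (a + l) = \<Omega> t a + \<eta> t a ** \<theta> t a"
    and \<theta>_deriv: "\<And>t a. ((\<lambda>s. \<theta> s a) has_vector_derivative \<theta> t (a + l)) (at t)"
    and \<eta>_deriv: "\<And>t a. ((\<lambda>s. \<eta> s a) has_vector_derivative - \<eta> t (a - l)) (at t)"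
    and \<Omega>_deriv: "\<And>t a. ((\<lambda>s. \<Omega> s a) has_vector_derivative \<eta> t (a - l) ** \<theta> t a) (at t)"
    and \<theta>_P: "\<And>t a. \<theta> t a ** P = - (\<theta> t (a + k) + \<theta> t (a + k - l))"
    and Q_\<eta>: "\<And>t a. Q ** \<eta> t a = - (\<eta> t (a - k) + \<eta> t (a - k + l))"
    and \<gamma>_eq: "\<And>t a. \<gamma> = \<Omega> t (a + l) ** P - Q ** \<Omega> t (a + k) + \<eta> t a ** \<theta> t (a + k)"
begin

definition G :: "real \<Rightarrow> int \<Rightarrow> complex^'m^'m"
  where "G t a = mat 1 - \<theta> t a ** matrix_inv (\<Omega> t (a + l)) ** \<eta> t a"

definition G_inv :: "real \<Rightarrow> int \<Rightarrow> complex^'m^'m"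
  where "G_inv t a = mat 1 + \<theta> t a ** matrix_inv (\<Omega> t a) ** \<eta> t a"

definition g :: "real \<Rightarrow> int \<Rightarrow> complex^'m^'m"
  where "g t a = G t a ** g0"

definition q :: "real \<Rightarrow> int \<Rightarrow> complex^'n^'m"
  where "q t a = \<theta> t a ** matrix_inv (\<Omega> t (a + l)) ** \<gamma>"

definition r :: "real \<Rightarrow> int \<Rightarrow> complex^'m^'n"
  where "r t a = matrix_inv (\<Omega> t a) ** \<eta> t a"

lemma \<Omega>_inv_perturb:
  "Y ** matrix_inv (\<Omega> t a) ** \<eta> t a ** \<theta> t a ** matrix_inv (\<Omega> t (a + l)) ** Z
     = Y ** matrix_inv (\<Omega> t a) ** Z - Y ** matrix_inv (\<Omega> t (a + l)) ** Z"
  by (rule matrix_inv_perturb(2)[OF \<Omega>_invertible \<Omega>_invertible \<Omega>_shift])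

lemma G_mul_G_inv: "G t a ** G_inv t a = mat 1"
  and G_inv_mul_G: "G_inv t a ** G t a = mat 1"
  unfolding G_def G_inv_def using push_through_inverse[OF \<Omega>_invertible \<Omega>_invertible \<Omega>_shift] by auto

lemma matrix_inv_g: "matrix_inv (g t a) = matrix_inv g0 ** G_inv t a"
proof (rule matrix_inv_unique)
  show "g t a ** (matrix_inv g0 ** G_inv t a) = mat 1"
    by (simp add: g_def matrix_mul_assoc matrix_mul_inv_cancel[OF g0_invertible] G_mul_G_inv)
  have "matrix_inv g0 ** G_inv t a ** g t a = matrix_inv g0 ** (G_inv t a ** G t a) ** g0"
    by (simp only: g_def matrix_mul_assoc)
  then show "matrix_inv g0 ** G_inv t a ** g t a = mat 1"
    by (simp add: G_inv_mul_G matrix_inv_left[OF g0_invertible])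
qed

lemma g_mul_inv_g: "g t a ** matrix_inv (g t b) = G t a ** G_inv t b"
  unfolding matrix_inv_g by (simp add: g_def matrix_mul_assoc matrix_mul_inv_cancel[OF g0_invertible])

lemma G_inv_\<theta>: "G_inv t a ** \<theta> t a ** matrix_inv (\<Omega> t (a + l)) = \<theta> t a ** matrix_inv (\<Omega> t a)"
  using \<Omega>_inv_perturb[of "\<theta> t a" t a "mat 1"] by (simp add: G_inv_def matrix_distribs)

lemma \<eta>_G: "matrix_inv (\<Omega> t a) ** \<eta> t a ** G t a = matrix_inv (\<Omega> t (a + l)) ** \<eta> t a"
  using \<Omega>_inv_perturb[of "mat 1" t a "\<eta> t a"] by (simp add: G_def matrix_distribs matrix_mul_assoc)

lemma matrix_inv_\<Omega>_deriv:
  "((\<lambda>s. matrix_inv (\<Omega> s a)) has_vector_derivative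
     - (matrix_inv (\<Omega> t a) ** (\<eta> t (a - l) ** \<theta> t a) ** matrix_inv (\<Omega> t a))) (at t)"
  by (rule has_vector_derivative_matrix_inv[OF \<Omega>_invertible \<Omega>_deriv])

lemma q_deriv: "((\<lambda>s. q s a) has_vector_derivative g t a ** matrix_inv (g t (a + l)) ** q t (a + l)) (at t)"
proof -
  have "g t a ** matrix_inv (g t (a + l)) ** q t (a + l)
      = G t a ** (G_inv t (a + l) ** \<theta> t (a + l) ** matrix_inv (\<Omega> t (a + l + l))) ** \<gamma>"
    by (simp only: q_def g_mul_inv_g matrix_mul_assoc)
  also have "\<dots> = G t a ** \<theta> t (a + l) ** matrix_inv (\<Omega> t (a + l)) ** \<gamma>"
    by (simp only: G_inv_\<theta> matrix_mul_assoc)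
  finally show ?thesis
    unfolding q_def
    by (intro has_vector_derivative_eq_rhs[OF has_vector_derivative_matrix_mul_left[OF
          has_vector_derivative_matrix_mul[OF \<theta>_deriv matrix_inv_\<Omega>_deriv]]])
       (simp add: G_def matrix_distribs matrix_mul_assoc)
qed

lemma r_deriv: "((\<lambda>s. r s a) has_vector_derivative - (r t (a - l) ** g t (a - l)) ** matrix_inv (g t a)) (at t)"
proof -
  have "- (r t (a - l) ** g t (a - l)) ** matrix_inv (g t a)
      = - (matrix_inv (\<Omega> t (a - l)) ** \<eta> t (a - l) ** G t (a - l) ** G_inv t a)"
    unfolding matrix_inv_g
    by (simp add: r_def g_def matrix_mul_assoc matrix_minus_left matrix_mul_inv_cancel[OF g0_invertible])
  also have "\<dots> = - (matrix_inv (\<Omega> t a) ** \<eta> t (a - l) ** G_inv t a)"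
    using \<eta>_G[of t "a - l"] by simp
  finally show ?thesis
    unfolding r_def
    by (intro has_vector_derivative_eq_rhs[OF
          has_vector_derivative_matrix_mul[OF matrix_inv_\<Omega>_deriv \<eta>_deriv]])
       (simp add: G_inv_def matrix_distribs matrix_mul_assoc)
qed

lemma g_mul_inv_g_expansion:
  "g t a ** matrix_inv (g t (a + k)) =
     mat 1 + \<theta> t a ** matrix_inv (\<Omega> t (a + l)) ** \<eta> t (a + l)
       - \<theta> t (a + k - l) ** matrix_inv (\<Omega> t (a + k)) ** \<eta> t (a + k)
       - q t a ** r t (a + k)"
proof -
  have \<theta>_P': "X ** \<theta> t b ** P = - (X ** \<theta> t (b + k) + X ** \<theta> t (b + k - l))" for X b
    by (simp add: matrix_mul_assoc[symmetric] \<theta>_P matrix_distribs)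
  have Q_\<eta>': "X ** Q ** \<eta> t b = - (X ** \<eta> t (b - k) + X ** \<eta> t (b - k + l))" for X b
    by (simp add: matrix_mul_assoc[symmetric] Q_\<eta> matrix_distribs)
  show ?thesis
    unfolding g_mul_inv_g G_def G_inv_def q_def r_def
    unfolding \<gamma>_eq[of t a]
    by (simp add: matrix_distribs matrix_mul_assoc matrix_mul_inv_cancel[OF \<Omega>_invertible] \<theta>_P \<theta>_P' Q_\<eta>')
qed

lemma F_deriv:
  "((\<lambda>s. \<theta> s b ** matrix_inv (\<Omega> s (b + l)) ** \<eta> s (b + l)) has_vector_derivative
     g t b ** matrix_inv (g t (b + l)) - mat 1) (at t)"
  unfolding g_mul_inv_g
  by (intro has_vector_derivative_eq_rhs[OF has_vector_derivative_matrix_mul[OF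
        has_vector_derivative_matrix_mul[OF \<theta>_deriv matrix_inv_\<Omega>_deriv] \<eta>_deriv]])
     (simp add: G_def G_inv_def matrix_distribs matrix_mul_assoc)

lemma q_mul_r_differentiable: "\<exists>D. ((\<lambda>s. q s a ** r s b) has_vector_derivative D) (at t)"
  using has_vector_derivative_matrix_mul[OF q_deriv r_deriv] by blast

lemma g_mul_inv_g_deriv:
  assumes "((\<lambda>s. q s a ** r s (a + k)) has_vector_derivative D) (at t)"
  shows "((\<lambda>s. g s a ** matrix_inv (g s (a + k))) has_vector_derivative
           g t a ** matrix_inv (g t (a + l)) - g t (a + k - l) ** matrix_inv (g t (a + k)) - D) (at t)"
proof -
  have "((\<lambda>s. mat 1 + \<theta> s a ** matrix_inv (\<Omega> s (a + l)) ** \<eta> s (a + l)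
       - \<theta> s (a + k - l) ** matrix_inv (\<Omega> s (a + k - l + l)) ** \<eta> s (a + k - l + l)
       - q s a ** r s (a + k)) has_vector_derivative
      0 + (g t a ** matrix_inv (g t (a + l)) - mat 1)
        - (g t (a + k - l) ** matrix_inv (g t (a + k - l + l)) - mat 1) - D) (at t)"
    by (intro has_vector_derivative_diff has_vector_derivative_add has_vector_derivative_const
        F_deriv assms)
  then show ?thesis
    unfolding g_mul_inv_g_expansion by simp
qed

end

section \<open>Plane waves and the Stein equation\<close>

definition wave :: "int \<Rightarrow> complex^'n^'n \<Rightarrow> real \<Rightarrow> int \<Rightarrow> complex^'n^'n"
  where "wave l L t j = mexp (t *\<^sub>R mpowi L l) ** mpowi L j"

definition dual_wave :: "int \<Rightarrow> complex^'n^'n \<Rightarrow> real \<Rightarrow> int \<Rightarrow> complex^'n^'n"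
  where "dual_wave l L t j = mexp ((- t) *\<^sub>R mpowi L l) ** mpowi L (- j)"

lemma wave_deriv:
  assumes "invertible L"
  shows "((\<lambda>s. wave l L s j) has_vector_derivative wave l L t (j + l)) (at t)"
  unfolding wave_def
  by (intro has_vector_derivative_eq_rhs[OF has_vector_derivative_matrix_mul_left[OF has_vector_derivative_mexp]])
     (simp add: mpowi_add[OF assms] mpowi_commute[OF assms, of j] matrix_mul_assoc)

lemma dual_wave_deriv:
  assumes "invertible L"
  shows "((\<lambda>s. dual_wave l L s j) has_vector_derivative - dual_wave l L t (j - l)) (at t)"
proof -
  have lj: "mpowi L l ** mpowi L (- j) = mpowi L (- (j - l))"
    using mpowi_add[OF assms, of l "- j"] by simp
  show ?thesis
    unfolding dual_wave_def
    by (intro has_vector_derivative_eq_rhs[OF has_vector_derivative_matrix_mul_left[OF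
          has_vector_derivative_mexp_neg]])
       (simp add: matrix_minus_left matrix_mul_assoc[symmetric] lj)
qed

lemma wave_shift:
  assumes "invertible L"
  shows "wave l L t (j + l) = mpowi L l ** wave l L t j"
proof -
  have "wave l L t (j + l) = mexp (t *\<^sub>R mpowi L l) ** mpowi L l ** mpowi L j"
    by (simp add: wave_def mpowi_add[OF assms] mpowi_commute[OF assms, of j] matrix_mul_assoc)
  also have "\<dots> = mpowi L l ** wave l L t j"
    by (simp add: wave_def mexp_commute[of "mpowi L l" "mpowi L l"] matrix_mul_assoc)
  finally show ?thesis .
qed

lemma dual_wave_shift:
  assumes "invertible L"
  shows "dual_wave l L t (j + l) = dual_wave l L t j ** mpowi L (- l)"
  using mpowi_add[OF assms, of "- j" "- l"] by (simp add: dual_wave_def matrix_mul_assoc)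

lemma wave_root:
  assumes "invertible L" and root: "- (mpowi L k + mpowi L (k - l)) = P"
  shows "wave l L t j ** P = - (wave l L t (j + k) + wave l L t (j + k - l))"
proof -
  have "mpowi L j ** P = - (mpowi L (j + k) + mpowi L (j + k - l))"
    unfolding root[symmetric] using mpowi_add[OF assms(1), of j k] mpowi_add[OF assms(1), of j "k - l"]
    by (simp add: matrix_distribs add_diff_eq)
  then show ?thesis
    by (simp add: wave_def matrix_mul_assoc[symmetric] matrix_distribs)
qed

lemma root_dual_wave:
  assumes "invertible L" and root: "- (mpowi L k + mpowi L (k - l)) = Q"
  shows "Q ** dual_wave l L t j = - (dual_wave l L t (j - k) + dual_wave l L t (j - k + l))"
proof -
  have "Q ** mpowi L l = mpowi L l ** Q"
    unfolding root[symmetric] by (simp add: matrix_distribs mpowi_commute[OF assms(1)])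
  then have "Q ** mexp ((- t) *\<^sub>R mpowi L l) = mexp ((- t) *\<^sub>R mpowi L l) ** Q"
    by (rule mexp_commute)
  then have "Q ** dual_wave l L t j = mexp ((- t) *\<^sub>R mpowi L l) ** (Q ** mpowi L (- j))"
    by (simp only: dual_wave_def matrix_mul_assoc)
  moreover have "Q ** mpowi L (- j) = - (mpowi L (- (j - k)) + mpowi L (- (j - k + l)))"
  proof -
    have "k + - j = - (j - k)" and "k - l + - j = - (j - k + l)" by simp_all
    then show ?thesis
      unfolding root[symmetric] using mpowi_add[OF assms(1), of k "- j"] mpowi_add[OF assms(1), of "k - l" "- j"]
      by (simp only: matrix_distribs)
  qed
  ultimately show ?thesis
    by (simp only: dual_wave_def matrix_distribs)
qed

locale spectral_data =
  fixes l k :: int and P Q :: "complex^'n^'n" and RP RQ :: "(complex^'n^'n) set"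
    and A :: "complex^'n^'n \<Rightarrow> complex^'n^'m"
    and B :: "complex^'n^'n \<Rightarrow> complex^'m^'n"
    and X :: "complex^'n^'n \<Rightarrow> complex^'n^'n \<Rightarrow> complex^'n^'n"
  assumes RP_invertible: "\<And>L. L \<in> RP \<Longrightarrow> invertible L"
    and RP_root: "\<And>L. L \<in> RP \<Longrightarrow> - (mpowi L k + mpowi L (k - l)) = P"
    and RQ_invertible: "\<And>L'. L' \<in> RQ \<Longrightarrow> invertible L'"
    and RQ_root: "\<And>L'. L' \<in> RQ \<Longrightarrow> - (mpowi L' k + mpowi L' (k - l)) = Q"
    and stein: "\<And>L L'. L \<in> RP \<Longrightarrow> L' \<in> RQ \<Longrightarrow>
        mpowi L' (- l) ** X L' L ** mpowi L l - X L' L = B L' ** A L"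
begin

definition \<theta> :: "real \<Rightarrow> int \<Rightarrow> complex^'n^'m"
  where "\<theta> t j = (\<Sum>L\<in>RP. A L ** wave l L t j)"

definition \<eta> :: "real \<Rightarrow> int \<Rightarrow> complex^'m^'n"
  where "\<eta> t j = (\<Sum>L'\<in>RQ. dual_wave l L' t j ** B L')"

text \<open>The paper's \<open>\<Omega>\<close> is \<open>\<Omega>\<^sub>0 t j j + \<omega>\<close>; keeping the two lattice indices apart lets the
  Stein equation be read as a simultaneous shift of both.\<close>
definition \<Omega>\<^sub>0 :: "real \<Rightarrow> int \<Rightarrow> int \<Rightarrow> complex^'n^'n"
  where "\<Omega>\<^sub>0 t c b = (\<Sum>L\<in>RP. \<Sum>L'\<in>RQ. dual_wave l L' t c ** X L' L ** wave l L t b)"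

lemma \<eta>_mul_\<theta>: "\<eta> t c ** \<theta> t b = (\<Sum>L\<in>RP. \<Sum>L'\<in>RQ. dual_wave l L' t c ** B L' ** A L ** wave l L t b)"
  unfolding \<eta>_def \<theta>_def sum_matrix_mul matrix_mul_sum
  by (simp add: sum.swap[of _ RQ RP] matrix_mul_assoc)

lemma \<Omega>\<^sub>0_shift: "\<Omega>\<^sub>0 t (c + l) (b + l) = \<Omega>\<^sub>0 t c b + \<eta> t c ** \<theta> t b"
proof -
  have "dual_wave l L' t (c + l) ** X L' L ** wave l L t (b + l)
      = dual_wave l L' t c ** X L' L ** wave l L t b + dual_wave l L' t c ** B L' ** A L ** wave l L t b"
    if "L \<in> RP" "L' \<in> RQ" for L L'
  proof -
    have "dual_wave l L' t (c + l) ** X L' L ** wave l L t (b + l)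
        = dual_wave l L' t c ** (mpowi L' (- l) ** X L' L ** mpowi L l) ** wave l L t b"
      by (simp add: dual_wave_shift[OF RQ_invertible[OF that(2)]] wave_shift[OF RP_invertible[OF that(1)]]
          matrix_mul_assoc)
    also have "\<dots> = dual_wave l L' t c ** (X L' L + B L' ** A L) ** wave l L t b"
      using stein[OF that] by (simp add: algebra_simps)
    finally show ?thesis by (simp add: matrix_distribs matrix_mul_assoc)
  qed
  then show ?thesis
    unfolding \<Omega>\<^sub>0_def \<eta>_mul_\<theta> sum.distrib[symmetric] by (intro sum.cong refl) simp
qed

lemma \<Omega>\<^sub>0_P: "\<Omega>\<^sub>0 t c b ** P = - (\<Omega>\<^sub>0 t c (b + k) + \<Omega>\<^sub>0 t c (b + k - l))"
  unfolding \<Omega>\<^sub>0_def sum_matrix_mul sum.distrib[symmetric] sum_negf[symmetric]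
  by (intro sum.cong refl)
     (simp add: matrix_mul_assoc[symmetric] wave_root[OF RP_invertible RP_root] matrix_distribs)

lemma Q_\<Omega>\<^sub>0: "Q ** \<Omega>\<^sub>0 t c b = - (\<Omega>\<^sub>0 t (c - k) b + \<Omega>\<^sub>0 t (c - k + l) b)"
  unfolding \<Omega>\<^sub>0_def matrix_mul_sum sum.distrib[symmetric] sum_negf[symmetric]
  by (intro sum.cong refl)
     (simp add: matrix_mul_assoc root_dual_wave[OF RQ_invertible RQ_root] matrix_distribs)

lemma \<theta>_P: "\<theta> t j ** P = - (\<theta> t (j + k) + \<theta> t (j + k - l))"
  unfolding \<theta>_def sum_matrix_mul sum.distrib[symmetric] sum_negf[symmetric]
  by (intro sum.cong refl)
     (simp add: matrix_mul_assoc[symmetric] wave_root[OF RP_invertible RP_root] matrix_distribs)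

lemma Q_\<eta>: "Q ** \<eta> t j = - (\<eta> t (j - k) + \<eta> t (j - k + l))"
  unfolding \<eta>_def matrix_mul_sum sum.distrib[symmetric] sum_negf[symmetric]
  by (intro sum.cong refl)
     (simp add: matrix_mul_assoc root_dual_wave[OF RQ_invertible RQ_root] matrix_distribs)

lemma \<theta>_deriv: "((\<lambda>s. \<theta> s j) has_vector_derivative \<theta> t (j + l)) (at t)"
  unfolding \<theta>_def
  by (intro has_vector_derivative_sum has_vector_derivative_matrix_mul_right wave_deriv RP_invertible)

lemma \<eta>_deriv: "((\<lambda>s. \<eta> s j) has_vector_derivative - \<eta> t (j - l)) (at t)"
  unfolding \<eta>_def sum_negf[symmetric] matrix_minus_left[symmetric]
  by (intro has_vector_derivative_sum has_vector_derivative_matrix_mul_left dual_wave_deriv RQ_invertible)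

lemma \<Omega>\<^sub>0_deriv:
  "((\<lambda>s. \<Omega>\<^sub>0 s c b) has_vector_derivative \<Omega>\<^sub>0 t c (b + l) - \<Omega>\<^sub>0 t (c - l) b) (at t)"
  unfolding \<Omega>\<^sub>0_def sum_subtractf[symmetric]
  by (intro has_vector_derivative_sum has_vector_derivative_eq_rhs[OF has_vector_derivative_matrix_mul[OF
        has_vector_derivative_matrix_mul_left[OF dual_wave_deriv] wave_deriv]] RP_invertible RQ_invertible)
     (simp_all add: matrix_distribs)

lemma is_volterra_dressing:
  assumes "\<And>t j. invertible (\<Omega>\<^sub>0 t j j + \<omega>)" and "invertible g0"
  shows "volterra_dressing l k P Q (\<omega> ** P - Q ** \<omega>) g0 \<theta> \<eta> (\<lambda>t j. \<Omega>\<^sub>0 t j j + \<omega>)"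
proof
  show "\<Omega>\<^sub>0 t (a + l) (a + l) + \<omega> = \<Omega>\<^sub>0 t a a + \<omega> + \<eta> t a ** \<theta> t a" for t a
    by (simp add: \<Omega>\<^sub>0_shift)
  show "((\<lambda>s. \<Omega>\<^sub>0 s a a + \<omega>) has_vector_derivative \<eta> t (a - l) ** \<theta> t a) (at t)" for t a
    using \<Omega>\<^sub>0_shift[of t "a - l" a]
    by (intro has_vector_derivative_eq_rhs[OF has_vector_derivative_add_const[THEN iffD2, OF \<Omega>\<^sub>0_deriv]]) simp
  show "\<omega> ** P - Q ** \<omega> = (\<Omega>\<^sub>0 t (a + l) (a + l) + \<omega>) ** P - Q ** (\<Omega>\<^sub>0 t (a + k) (a + k) + \<omega>)
      + \<eta> t a ** \<theta> t (a + k)" for t a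
  proof -
    have idx: "a + l + k = a + k + l" "a + l + k - l = a + k" "a + k - k = a" "a + k - k + l = a + l"
      by simp_all
    have P: "\<Omega>\<^sub>0 t (a + l) (a + l) ** P = - (\<Omega>\<^sub>0 t a (a + k) + \<eta> t a ** \<theta> t (a + k) + \<Omega>\<^sub>0 t (a + l) (a + k))"
      and Q: "Q ** \<Omega>\<^sub>0 t (a + k) (a + k) = - (\<Omega>\<^sub>0 t a (a + k) + \<Omega>\<^sub>0 t (a + l) (a + k))"
      using \<Omega>\<^sub>0_P[of t "a + l" "a + l", unfolded idx] Q_\<Omega>\<^sub>0[of t "a + k" "a + k", unfolded idx]
        \<Omega>\<^sub>0_shift[of t a "a + k"]
      by simp_all
    show ?thesis by (simp only: matrix_distribs P Q) (simp add: algebra_simps)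
  qed
qed (use assms \<theta>_deriv \<eta>_deriv \<theta>_P Q_\<eta> in auto)

end

theorem mainTheorem1:
  fixes k l :: int
    and P Q :: "complex^'n^'n"
    and RP RQ :: "(complex^'n^'n) set"
    and A :: "complex^'n^'n \<Rightarrow> complex^'n^'m"
    and B :: "complex^'n^'n \<Rightarrow> complex^'m^'n"
    and X :: "complex^'n^'n \<Rightarrow> complex^'n^'n \<Rightarrow> complex^'n^'n"
    and \<omega> :: "complex^'n^'n"
    and g0 :: "complex^'m^'m"
    and \<theta> :: "real \<Rightarrow> int \<Rightarrow> complex^'n^'m"
    and \<eta> :: "real \<Rightarrow> int \<Rightarrow> complex^'m^'n"
    and \<Omega> :: "real \<Rightarrow> int \<Rightarrow> complex^'n^'n"
    and g :: "real \<Rightarrow> int \<Rightarrow> complex^'m^'m"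
    and q :: "real \<Rightarrow> int \<Rightarrow> complex^'n^'m"
    and r :: "real \<Rightarrow> int \<Rightarrow> complex^'m^'n"
    and \<gamma>1 :: "complex^'n^'n"
  assumes k_pos: "k > 0"
    and finP: "finite RP" and finQ: "finite RQ"
    and RP_inv: "\<And>\<Lambda>. \<Lambda> \<in> RP \<Longrightarrow> invertible \<Lambda>"
    and RP_root: "\<And>\<Lambda>. \<Lambda> \<in> RP \<Longrightarrow> - (mpowi \<Lambda> k + mpowi \<Lambda> (k - l)) = P"
    and RQ_inv: "\<And>\<Lambda>'. \<Lambda>' \<in> RQ \<Longrightarrow> invertible \<Lambda>'"
    and RQ_root: "\<And>\<Lambda>'. \<Lambda>' \<in> RQ \<Longrightarrow> - (mpowi \<Lambda>' k + mpowi \<Lambda>' (k - l)) = Q"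
    and stein: "\<And>\<Lambda> \<Lambda>'. \<Lambda> \<in> RP \<Longrightarrow> \<Lambda>' \<in> RQ \<Longrightarrow>
        mpowi \<Lambda>' (- l) ** X \<Lambda>' \<Lambda> ** mpowi \<Lambda> l - X \<Lambda>' \<Lambda> = B \<Lambda>' ** A \<Lambda>"
    and \<gamma>1_def: "\<gamma>1 = \<omega> ** P - Q ** \<omega>"
    and \<theta>_def: "\<And>t j. \<theta> t j = (\<Sum>\<Lambda>\<in>RP. A \<Lambda> ** mexp (t *\<^sub>R mpowi \<Lambda> l) ** mpowi \<Lambda> j)"
    and \<eta>_def: "\<And>t j. \<eta> t j = (\<Sum>\<Lambda>'\<in>RQ. mexp ((- t) *\<^sub>R mpowi \<Lambda>' l) ** mpowi \<Lambda>' (- j) ** B \<Lambda>')"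
    and \<Omega>_def: "\<And>t j. \<Omega> t j = (\<Sum>\<Lambda>\<in>RP. \<Sum>\<Lambda>'\<in>RQ.
        mexp ((- t) *\<^sub>R mpowi \<Lambda>' l) ** mpowi \<Lambda>' (- j) ** X \<Lambda>' \<Lambda>
          ** mexp (t *\<^sub>R mpowi \<Lambda> l) ** mpowi \<Lambda> j) + \<omega>"
    and \<Omega>_inv: "\<And>t j. invertible (\<Omega> t j)"
    and g0_inv: "invertible g0"
    and g_def: "\<And>t j. g t j = (mat 1 - \<theta> t j ** matrix_inv (\<Omega> t (j + l)) ** \<eta> t j) ** g0"
    and q_def: "\<And>t j. q t j = \<theta> t j ** matrix_inv (\<Omega> t (j + l)) ** \<gamma>1"
    and r_def: "\<And>t j. r t j = matrix_inv (\<Omega> t j) ** \<eta> t j"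
  shows "\<And>t j. invertible (g t j) \<Longrightarrow> invertible (g t (j + k)) \<Longrightarrow> invertible (g t (j + l)) \<Longrightarrow>
      (\<exists>D1 D2.
         ((\<lambda>s. g s j ** matrix_inv (g s (j + k))) has_vector_derivative D1) (at t) \<and>
         ((\<lambda>s. q s j ** r s (j + k)) has_vector_derivative D2) (at t) \<and>
         D1 + g t (j + k - l) ** matrix_inv (g t (j + k)) - g t j ** matrix_inv (g t (j + l)) = - D2)
    \<and> ((\<lambda>s. q s j) has_vector_derivative (g t j ** matrix_inv (g t (j + l)) ** q t (j + l))) (at t)
    \<and> ((\<lambda>s. r s j) has_vector_derivative (- (r t (j - l) ** g t (j - l)) ** matrix_inv (g t j))) (at t)"
proof -
  interpret S: spectral_data l k P Q RP RQ A B X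
    using RP_inv RP_root RQ_inv RQ_root stein by unfold_locales
  have \<theta>_eq: "\<theta> = S.\<theta>" and \<eta>_eq: "\<eta> = S.\<eta>" and \<Omega>_eq: "\<Omega> = (\<lambda>t j. S.\<Omega>\<^sub>0 t j j + \<omega>)"
    by (simp_all add: fun_eq_iff \<theta>_def \<eta>_def \<Omega>_def S.\<theta>_def S.\<eta>_def S.\<Omega>\<^sub>0_def
        wave_def dual_wave_def matrix_mul_assoc)
  interpret D: volterra_dressing l k P Q \<gamma>1 g0 \<theta> \<eta> \<Omega>
    unfolding \<gamma>1_def \<theta>_eq \<eta>_eq \<Omega>_eq
    by (rule S.is_volterra_dressing) (use \<Omega>_inv g0_inv in \<open>simp_all add: \<Omega>_eq\<close>)
  have g: "g = D.g" and q: "q = D.q" and r: "r = D.r"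
    by (simp_all add: fun_eq_iff g_def q_def r_def D.g_def D.G_def D.q_def D.r_def)
  fix t j
  obtain D2 where D2: "((\<lambda>s. D.q s j ** D.r s (j + k)) has_vector_derivative D2) (at t)"
    using D.q_mul_r_differentiable by blast
  show "?thesis t j"
    unfolding g q r using D.g_mul_inv_g_deriv[OF D2] D2 D.q_deriv D.r_deriv by auto
qed

end
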